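(* Let $w_1,w_2,\dots\in F$ be arbitrary, set $w_0=1$, and define $a_0=1,a_1,a_2,\dots$ by $\sum_{n\ge0}a_nz^n=\bigl(\sum_{n\ge0}w_nz^n\bigr)^{-1}$. Then \[ \sum_{L}w_L\,\mathbf r_L=\Bigl(\sum_{n\ge0}a_n\mathbf h_n\Bigr)^{-1}, \] where the sum is over all compositions $L$ (including the empty one, with $\mathbf r_\emptyset=1$) and $w_L=w_{L_1}\cdots w_{L_k}$ for $L=(L_1,\dots,L_k)$.
   Context: $F$ is a field of characteristic $0$. In $F\langle\langle X_1,X_2,\dots\rangle\rangle$ (noncommuting variables), $\mathbf h_n=\sum_{i_1\le\cdots\le i_n}X_{i_1}\cdots X_{i_n}$ ($\mathbf h_0=1$). For a composition $L=(L_1,\dots,L_k)$ of $n$, $\mathbf r_L=\sum X_{i_1}\cdots X_{i_n}$ over $(i_1,\dots,i_n)$ with $i_1\le\cdots\le i_{L_1}>i_{L_1+1}\le\cdots\le i_{L_1+L_2}>\cdots>i_{L_1+\cdots+L_{k-1}+1}\le\cdots\le i_n$. *)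

theory Defs
  imports "HOL-Computational_Algebra.Formal_Power_Series"
begin

text \<open>Noncommutative formal power series over F in variables X_1, X_2, ...
  A word X_{i_1} ... X_{i_n} is represented by the list [i_1, ..., i_n] of naturals
  (the index set is an order-isomorphic copy of the positive integers); a series
  is its coefficient function on words.\<close>

type_synonym 'a ncseries = "nat list \<Rightarrow> 'a"

definition nc_one :: "'a::zero_neq_one ncseries" where
  "nc_one u = (if u = [] then 1 else 0)"

definition nc_mult :: "'a::comm_semiring_1 ncseries \<Rightarrow> 'a ncseries \<Rightarrow> 'a ncseries" where
  "nc_mult f g u = (\<Sum>k\<le>length u. f (take k u) * g (drop k u))"

definition h_series :: "nat \<Rightarrow> 'a::zero_neq_one ncseries" where
  "h_series n u = (if length u = n \<and> sorted u then 1 else 0)"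

definition compositions :: "nat \<Rightarrow> nat list set" where
  "compositions n = {L. (\<forall>x\<in>set L. 0 < x) \<and> sum_list L = n}"

definition comp_breaks :: "nat list \<Rightarrow> nat set" where
  "comp_breaks L = {sum_list (take m L) | m. 0 < m \<and> m < length L}"

text \<open>r_L: sum of the words i_1..i_n, weakly increasing inside blocks and strictly
  decreasing across block boundaries (0-indexed positions j, j+1).\<close>
definition r_series :: "nat list \<Rightarrow> 'a::zero_neq_one ncseries" where
  "r_series L u = (if length u = sum_list L \<and>
      (\<forall>j. Suc j < length u \<longrightarrow>
         (if Suc j \<in> comp_breaks L then u ! j > u ! Suc j else u ! j \<le> u ! Suc j))
    then 1 else 0)"

definition w_comp :: "(nat \<Rightarrow> 'a::comm_monoid_mult) \<Rightarrow> nat list \<Rightarrow> 'a" where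
  "w_comp w L = prod_list (map w L)"

text \<open>\<Sum>_L w_L r_L (only compositions of length u contribute to the coefficient of u).\<close>
definition sum_wr :: "(nat \<Rightarrow> 'a::comm_semiring_1) \<Rightarrow> 'a ncseries" where
  "sum_wr w u = (\<Sum>L\<in>compositions (length u). w_comp w L * r_series L u)"

definition a_coeff :: "(nat \<Rightarrow> 'a::field) \<Rightarrow> nat \<Rightarrow> 'a" where
  "a_coeff w n = fps_nth (inverse (Abs_fps (\<lambda>k. if k = 0 then 1 else w k))) n"

text \<open>\<Sum>_n a_n h_n (only n = length u contributes to the coefficient of u).\<close>
definition sum_ah :: "(nat \<Rightarrow> 'a::field) \<Rightarrow> 'a ncseries" where
  "sum_ah w u = a_coeff w (length u) * h_series (length u) u"

end

theory Submission
  imports Defs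
begin

text \<open>
  A word u satisfies the conditions defining r_L exactly when the block boundaries of L are the
  descents of u, so the coefficient of u in W = \<Sum>_L w_L r_L is w_L for the composition L of u
  into its maximal weakly increasing runs.  If the first run of u has length p, then for k \<le> p
  the coefficient of drop k u in W is w_(p-k) times that of drop p u (with w_0 = 1), while
  take k u is weakly increasing iff k \<le> p.  Hence the coefficient of a nonempty u in
  (\<Sum> a_n h_n) W is (\<Sum>_(k\<le>p) a_k w_(p-k)) times a coefficient of W, and this convolution vanishes
  because \<Sum> a_n z^n inverts \<Sum> w_n z^n.  The product in the other order is handled
  symmetrically, using the last run of u.
\<close>

definition is_descent_composition :: "nat list \<Rightarrow> nat list \<Rightarrow> bool" where
  "is_descent_composition L u \<longleftrightarrow> length u = sum_list L \<and>
     (\<forall>j. Suc j < length u \<longrightarrow> (Suc j \<in> comp_breaks L \<longleftrightarrow> u ! Suc j < u ! j))"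

lemma r_series_eq: "r_series L u = (if is_descent_composition L u then 1 else 0)"
  unfolding r_series_def is_descent_composition_def
  by (intro if_cong refl) (auto simp: not_less split: if_splits)

lemma comp_breaks_eq_image: "comp_breaks L = (\<lambda>m. sum_list (take m L)) ` {0<..<length L}"
  unfolding comp_breaks_def by auto

lemma comp_breaks_append:
  "comp_breaks (L1 @ L2) = comp_breaks L1 \<union> (if L1 = [] \<or> L2 = [] then {} else {sum_list L1})
     \<union> (+) (sum_list L1) ` comp_breaks L2"
proof -
  have "{0<..<length L1 + length L2} = {0<..<length L1} \<union>
      (if L1 = [] \<or> L2 = [] then {} else {length L1}) \<union> (+) (length L1) ` {0<..<length L2}"
  proof (intro equalityI subsetI)
    fix m assume m: "m \<in> {0<..<length L1 + length L2}"
    show "m \<in> {0<..<length L1} \<union> (if L1 = [] \<or> L2 = [] then {} else {length L1})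
        \<union> (+) (length L1) ` {0<..<length L2}"
    proof (cases "length L1 < m")
      case True
      then have "m - length L1 \<in> {0<..<length L2}" "m = length L1 + (m - length L1)"
        using m by auto
      then show ?thesis by blast
    qed (use m in auto)
  qed (auto split: if_splits)
  then show ?thesis
    unfolding comp_breaks_eq_image by (auto simp: image_Un image_image)
qed

lemma comp_breaks_le_sum_list: "y \<in> comp_breaks L \<Longrightarrow> y \<le> sum_list L"
  unfolding comp_breaks_def
  by (auto, metis append_take_drop_id sum_list_append le_add1)

lemma all_Suc_less_split:
  assumes "s \<le> (n::nat)"
  shows "(\<forall>j. Suc j < n \<longrightarrow> P j) \<longleftrightarrow>
    (\<forall>j. Suc j < s \<longrightarrow> P j) \<and> (0 < s \<and> s < n \<longrightarrow> P (s - 1)) \<and> (\<forall>j. Suc j < n - s \<longrightarrow> P (s + j))"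
proof (intro iffI allI impI)
  fix j assume H: "(\<forall>j. Suc j < s \<longrightarrow> P j) \<and> (0 < s \<and> s < n \<longrightarrow> P (s - 1)) \<and>
      (\<forall>j. Suc j < n - s \<longrightarrow> P (s + j))" and j: "Suc j < n"
  consider "Suc j < s" | "Suc j = s" | "s \<le> j" by linarith
  then show "P j"
  proof cases
    case 3
    then have "Suc (j - s) < n - s" "s + (j - s) = j" using j by auto
    then show ?thesis using H by metis
  qed (use H j in auto)
qed (use assms in \<open>auto dest: spec[of _ "s - 1"]\<close>)

lemma is_descent_composition_append:
  "is_descent_composition (L1 @ L2) u \<longleftrightarrow>
     is_descent_composition L1 (take (sum_list L1) u) \<and>
     is_descent_composition L2 (drop (sum_list L1) u) \<and>
     (0 < sum_list L1 \<and> sum_list L1 < length u \<longrightarrow> u ! sum_list L1 < u ! (sum_list L1 - 1))"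
    (is "?lhs \<longleftrightarrow> ?rhs")
proof (cases "length u = sum_list L1 + sum_list L2")
  case False
  then show ?thesis unfolding is_descent_composition_def by auto
next
  case len: True
  define s where "s = sum_list L1"
  define B where "B = comp_breaks (L1 @ L2)"
  have B: "B = comp_breaks L1 \<union> (if L1 = [] \<or> L2 = [] then {} else {s}) \<union> (+) s ` comp_breaks L2"
    unfolding B_def s_def by (rule comp_breaks_append)
  have B1: "Suc j \<in> B \<longleftrightarrow> Suc j \<in> comp_breaks L1" if "Suc j < s" for j
    using that by (auto simp: B)
  have B2: "s \<in> B" if "0 < s" "s < length u"
    using that len by (auto simp: B s_def)
  have B3: "Suc (s + j) \<in> B \<longleftrightarrow> Suc j \<in> comp_breaks L2" for j
    using comp_breaks_le_sum_list[of "Suc (s + j)" L1] by (auto simp: B s_def)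
  have "?lhs \<longleftrightarrow> (\<forall>j. Suc j < length u \<longrightarrow> (Suc j \<in> B \<longleftrightarrow> u ! Suc j < u ! j))"
    using len unfolding is_descent_composition_def B_def by simp
  also have "\<dots> \<longleftrightarrow> (\<forall>j. Suc j < s \<longrightarrow> (Suc j \<in> B \<longleftrightarrow> u ! Suc j < u ! j)) \<and>
      (0 < s \<and> s < length u \<longrightarrow> (Suc (s - 1) \<in> B \<longleftrightarrow> u ! Suc (s - 1) < u ! (s - 1))) \<and>
      (\<forall>j. Suc j < length u - s \<longrightarrow> (Suc (s + j) \<in> B \<longleftrightarrow> u ! Suc (s + j) < u ! (s + j)))"
    by (rule all_Suc_less_split) (simp add: len s_def)
  also have "\<dots> \<longleftrightarrow> ?rhs"
  proof -
    have "(\<forall>j. Suc j < s \<longrightarrow> (Suc j \<in> B \<longleftrightarrow> u ! Suc j < u ! j)) \<longleftrightarrow>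
        is_descent_composition L1 (take s u)"
      using len B1 unfolding is_descent_composition_def s_def by auto
    moreover have "(0 < s \<and> s < length u \<longrightarrow>
          (Suc (s - 1) \<in> B \<longleftrightarrow> u ! Suc (s - 1) < u ! (s - 1)))
        \<longleftrightarrow> (0 < s \<and> s < length u \<longrightarrow> u ! s < u ! (s - 1))"
      using B2 by auto
    moreover have "(\<forall>j. Suc j < length u - s \<longrightarrow>
          (Suc (s + j) \<in> B \<longleftrightarrow> u ! Suc (s + j) < u ! (s + j)))
        \<longleftrightarrow> is_descent_composition L2 (drop s u)"
      using len B3 unfolding is_descent_composition_def s_def by auto
    ultimately show ?thesis unfolding s_def by blast
  qed
  finally show ?thesis .
qed

definition maximal_sorted_prefix :: "nat list \<Rightarrow> nat \<Rightarrow> bool" where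
  "maximal_sorted_prefix u p \<longleftrightarrow>
     0 < p \<and> p \<le> length u \<and> sorted (take p u) \<and> (p < length u \<longrightarrow> u ! p < u ! (p - 1))"

definition maximal_sorted_suffix :: "nat list \<Rightarrow> nat \<Rightarrow> bool" where
  "maximal_sorted_suffix u q \<longleftrightarrow>
     q < length u \<and> sorted (drop q u) \<and> (0 < q \<longrightarrow> u ! q < u ! (q - 1))"

lemma is_descent_composition_Nil: "is_descent_composition [] u \<longleftrightarrow> u = []"
  by (auto simp: is_descent_composition_def)

lemma is_descent_composition_single:
  "is_descent_composition [x] u \<longleftrightarrow> length u = x \<and> sorted u"
  by (auto simp: is_descent_composition_def comp_breaks_def sorted_iff_nth_Suc not_less)

lemma is_descent_composition_Cons:
  "0 < x \<Longrightarrow> is_descent_composition (x # L) u \<longleftrightarrow>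
     maximal_sorted_prefix u x \<and> is_descent_composition L (drop x u)"
  using is_descent_composition_append[of "[x]" L u]
  by (auto simp: is_descent_composition_single maximal_sorted_prefix_def)

lemma is_descent_composition_snoc:
  "0 < x \<Longrightarrow> is_descent_composition (L @ [x]) u \<longleftrightarrow>
     is_descent_composition L (take (sum_list L) u) \<and> length u = sum_list L + x \<and>
     maximal_sorted_suffix u (sum_list L)"
proof -
  assume "0 < x"
  then have "length u - sum_list L = x \<longleftrightarrow> length u = sum_list L + x" by auto
  moreover have "length u = sum_list L + x \<Longrightarrow> sum_list L < length u" using \<open>0 < x\<close> by simp
  moreover note is_descent_composition_append[of L "[x]" u]
  ultimately show ?thesis
    unfolding is_descent_composition_single maximal_sorted_suffix_def length_drop by argo
qed

lemma sorted_take_nth_mono: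
  "sorted (take p u) \<Longrightarrow> i \<le> j \<Longrightarrow> j < p \<Longrightarrow> j < length u \<Longrightarrow> u ! i \<le> u ! j"
  using sorted_nth_mono[of "take p u" i j] by simp

lemma sorted_drop_nth_mono:
  "sorted (drop q u) \<Longrightarrow> q \<le> i \<Longrightarrow> i \<le> j \<Longrightarrow> j < length u \<Longrightarrow> u ! i \<le> u ! j"
  using sorted_nth_mono[of "drop q u" "i - q" "j - q"] by simp

lemma maximal_sorted_prefix_unique:
  assumes "maximal_sorted_prefix u p" "maximal_sorted_prefix u p'"
  shows "p = p'"
proof (rule ccontr)
  assume "p \<noteq> p'"
  then consider "p < p'" | "p' < p" by linarith
  then show False
  proof cases
    case 1
    then show False using assms sorted_take_nth_mono[of p' u "p - 1" p]
      by (auto simp: maximal_sorted_prefix_def)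
  next
    case 2
    then show False using assms sorted_take_nth_mono[of p u "p' - 1" p']
      by (auto simp: maximal_sorted_prefix_def)
  qed
qed

lemma maximal_sorted_suffix_unique:
  assumes "maximal_sorted_suffix u q" "maximal_sorted_suffix u q'"
  shows "q = q'"
proof (rule ccontr)
  assume "q \<noteq> q'"
  then consider "q < q'" | "q' < q" by linarith
  then show False
  proof cases
    case 1
    then have "u ! (q' - 1) \<le> u ! q'"
      using assms by (intro sorted_drop_nth_mono[of q]) (auto simp: maximal_sorted_suffix_def)
    then show False using 1 assms(2) by (simp add: maximal_sorted_suffix_def)
  next
    case 2
    then have "u ! (q - 1) \<le> u ! q"
      using assms by (intro sorted_drop_nth_mono[of q']) (auto simp: maximal_sorted_suffix_def)
    then show False using 2 assms(1) by (simp add: maximal_sorted_suffix_def)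
  qed
qed

lemma maximal_sorted_prefix_exists: "u \<noteq> [] \<Longrightarrow> \<exists>p. maximal_sorted_prefix u p"
proof (induction u rule: induct_list012)
  case (2 a)
  then show ?case by (auto simp: maximal_sorted_prefix_def intro: exI[of _ 1])
next
  case (3 a b xs)
  show ?case
  proof (cases "a \<le> b")
    case True
    from 3 obtain p where p: "maximal_sorted_prefix (b # xs) p" by blast
    then have "take p (b # xs) = b # take (p - 1) xs"
      by (cases p) (auto simp: maximal_sorted_prefix_def)
    then have "maximal_sorted_prefix (a # b # xs) (Suc p)"
      using p True by (auto simp: maximal_sorted_prefix_def)
    then show ?thesis ..
  next
    case False
    then have "maximal_sorted_prefix (a # b # xs) 1" by (simp add: maximal_sorted_prefix_def)
    then show ?thesis ..
  qed
qed simp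

lemma maximal_sorted_suffix_exists: "u \<noteq> [] \<Longrightarrow> \<exists>q. maximal_sorted_suffix u q"
proof (induction u)
  case (Cons a xs)
  show ?case
  proof (cases xs)
    case Nil
    then have "maximal_sorted_suffix (a # xs) 0" by (simp add: maximal_sorted_suffix_def)
    then show ?thesis ..
  next
    case (Cons b ys)
    from Cons.IH obtain q where q: "maximal_sorted_suffix xs q" using Cons by blast
    consider "0 < q" | "q = 0" "a \<le> b" | "q = 0" "b < a" by linarith
    then show ?thesis
    proof cases
      case 1
      then have "maximal_sorted_suffix (a # xs) (Suc q)"
        using q by (auto simp: maximal_sorted_suffix_def)
      then show ?thesis ..
    next
      case 2
      then have "maximal_sorted_suffix (a # xs) 0"
        using q Cons by (auto simp: maximal_sorted_suffix_def intro: order_trans)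
      then show ?thesis ..
    next
      case 3
      then have "maximal_sorted_suffix (a # xs) 1"
        using q Cons by (simp add: maximal_sorted_suffix_def)
      then show ?thesis ..
    qed
  qed
qed simp

lemma maximal_sorted_prefix_sorted_take_iff:
  assumes "maximal_sorted_prefix u p" "k \<le> length u"
  shows "sorted (take k u) \<longleftrightarrow> k \<le> p"
proof
  assume "sorted (take k u)"
  show "k \<le> p"
  proof (rule ccontr)
    assume "\<not> k \<le> p"
    then have "u ! (p - 1) \<le> u ! p"
      using assms \<open>sorted (take k u)\<close> by (intro sorted_take_nth_mono[of k]) auto
    then show False using assms \<open>\<not> k \<le> p\<close> by (simp add: maximal_sorted_prefix_def)
  qed
next
  assume "k \<le> p"
  then show "sorted (take k u)"
    using assms(1) sorted_wrt_take[of _ "take p u" k]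
    by (simp add: maximal_sorted_prefix_def min_def)
qed

lemma maximal_sorted_prefix_drop:
  assumes "maximal_sorted_prefix u p" "k < p"
  shows "maximal_sorted_prefix (drop k u) (p - k)"
  using assms sorted_wrt_drop[of _ "take p u" k]
  by (auto simp: maximal_sorted_prefix_def take_drop)

lemma maximal_sorted_suffix_sorted_drop_iff:
  assumes "maximal_sorted_suffix u q"
  shows "sorted (drop k u) \<longleftrightarrow> q \<le> k"
proof
  assume "sorted (drop k u)"
  show "q \<le> k"
  proof (rule ccontr)
    assume "\<not> q \<le> k"
    then have "u ! (q - 1) \<le> u ! q"
      using assms \<open>sorted (drop k u)\<close>
      by (intro sorted_drop_nth_mono[of k]) (auto simp: maximal_sorted_suffix_def)
    then show False using assms \<open>\<not> q \<le> k\<close> by (simp add: maximal_sorted_suffix_def)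
  qed
next
  assume "q \<le> k"
  then show "sorted (drop k u)"
    using assms sorted_wrt_drop[of _ "drop q u" "k - q"] by (simp add: maximal_sorted_suffix_def)
qed

lemma maximal_sorted_suffix_take:
  assumes "maximal_sorted_suffix u q" "q < k"
  shows "maximal_sorted_suffix (take k u) q"
  using assms sorted_wrt_take[of _ "drop q u" "k - q"]
  by (auto simp: maximal_sorted_suffix_def drop_take)

lemma length_le_sum_list: "\<forall>x\<in>set L. 0 < x \<Longrightarrow> length L \<le> sum_list (L :: nat list)"
  by (induction L) auto

lemma finite_compositions: "finite (compositions n)"
proof (rule finite_subset)
  show "compositions n \<subseteq> {xs. set xs \<subseteq> {0..n} \<and> length xs \<le> n}"
    unfolding compositions_def using length_le_sum_list member_le_sum_list by fastforce
  show "finite {xs. set xs \<subseteq> {0..n} \<and> length xs \<le> n}"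
    by (rule finite_lists_length_le) simp
qed

lemma compositions_0: "compositions 0 = {[]}"
proof -
  have "L = []" if "\<forall>x\<in>set L. 0 < x" "sum_list L = 0" for L :: "nat list"
    using that by (cases L) auto
  then show ?thesis by (auto simp: compositions_def)
qed

lemma compositions_Cons:
  "0 < n \<Longrightarrow> compositions n = (\<Union>x\<in>{1..n}. (#) x ` compositions (n - x))"
  unfolding compositions_def
proof (intro equalityI subsetI)
  fix L assume "0 < n" "L \<in> {L. (\<forall>x\<in>set L. 0 < x) \<and> sum_list L = n}"
  then show "L \<in> (\<Union>x\<in>{1..n}. (#) x ` {L. (\<forall>x\<in>set L. 0 < x) \<and> sum_list L = n - x})"
    by (cases L) (auto intro!: bexI)
qed auto

lemma compositions_snoc:
  "0 < n \<Longrightarrow> compositions n = (\<Union>x\<in>{1..n}. (\<lambda>L. L @ [x]) ` compositions (n - x))"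
  unfolding compositions_def
proof (intro equalityI subsetI)
  fix L assume "0 < n" "L \<in> {L. (\<forall>x\<in>set L. 0 < x) \<and> sum_list L = n}"
  then show "L \<in> (\<Union>x\<in>{1..n}. (\<lambda>L. L @ [x]) ` {L. (\<forall>x\<in>set L. 0 < x) \<and> sum_list L = n - x})"
    by (cases L rule: rev_cases) (auto intro!: bexI)
qed auto

lemma sum_compositions_Cons:
  assumes "0 < n"
  shows "(\<Sum>L\<in>compositions n. f L) = (\<Sum>x=1..n. \<Sum>L\<in>compositions (n - x). f (x # L))"
proof -
  have "(\<Sum>L\<in>compositions n. f L) = (\<Sum>x=1..n. \<Sum>L\<in>(#) x ` compositions (n - x). f L)"
    unfolding compositions_Cons[OF assms]
    by (rule sum.UNION_disjoint) (auto simp: finite_compositions)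
  then show ?thesis by (simp add: sum.reindex)
qed

lemma sum_compositions_snoc:
  assumes "0 < n"
  shows "(\<Sum>L\<in>compositions n. f L) = (\<Sum>x=1..n. \<Sum>L\<in>compositions (n - x). f (L @ [x]))"
proof -
  have "(\<Sum>L\<in>compositions n. f L) = (\<Sum>x=1..n. \<Sum>L\<in>(\<lambda>L. L @ [x]) ` compositions (n - x). f L)"
    unfolding compositions_snoc[OF assms]
    by (rule sum.UNION_disjoint) (auto simp: finite_compositions)
  then show ?thesis by (simp add: sum.reindex inj_on_def)
qed

lemma sum_wr_Nil: "sum_wr w [] = 1"
  by (simp add: sum_wr_def compositions_0 w_comp_def r_series_eq is_descent_composition_Nil)

lemma sum_wr_first_block:
  assumes "u \<noteq> []"
  shows "sum_wr w u =
    (\<Sum>x=1..length u. if maximal_sorted_prefix u x then w x * sum_wr w (drop x u) else 0)"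
proof -
  have block: "w_comp w (x # L) * r_series (x # L) u =
      (if maximal_sorted_prefix u x then w x else 0) * (w_comp w L * r_series L (drop x u))"
    if "0 < x" for x L
    using that by (simp add: w_comp_def r_series_eq is_descent_composition_Cons)
  have "sum_wr w u = (\<Sum>x=1..length u.
      \<Sum>L\<in>compositions (length u - x). w_comp w (x # L) * r_series (x # L) u)"
    unfolding sum_wr_def using assms by (simp add: sum_compositions_Cons)
  also have "\<dots> = (\<Sum>x=1..length u.
      (if maximal_sorted_prefix u x then w x else 0) * sum_wr w (drop x u))"
    by (simp add: block sum_wr_def sum_distrib_left)
  finally show ?thesis by (auto intro!: sum.cong)
qed

lemma sum_wr_last_block:
  assumes "u \<noteq> []"
  shows "sum_wr w u = (\<Sum>x=1..length u.
    if maximal_sorted_suffix u (length u - x) then sum_wr w (take (length u - x) u) * w x else 0)"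
proof -
  have block: "w_comp w (L @ [x]) * r_series (L @ [x]) u =
      (if maximal_sorted_suffix u (length u - x) then w x else 0) *
      (w_comp w L * r_series L (take (length u - x) u))"
    if "0 < x" "x \<le> length u" "L \<in> compositions (length u - x)" for x L
    using that
    by (auto simp: w_comp_def r_series_eq is_descent_composition_snoc compositions_def ac_simps)
  have "sum_wr w u = (\<Sum>x=1..length u.
      \<Sum>L\<in>compositions (length u - x). w_comp w (L @ [x]) * r_series (L @ [x]) u)"
    unfolding sum_wr_def using assms by (simp add: sum_compositions_snoc)
  also have "\<dots> = (\<Sum>x=1..length u.
      (if maximal_sorted_suffix u (length u - x) then w x else 0) * sum_wr w (take (length u - x) u))"
    by (intro sum.cong refl) (simp add: block sum_wr_def sum_distrib_left)
  finally show ?thesis by (auto intro!: sum.cong simp: mult.commute)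
qed

lemma sum_wr_maximal_sorted_prefix:
  assumes "maximal_sorted_prefix u p"
  shows "sum_wr w u = w p * sum_wr w (drop p u)"
proof -
  have "maximal_sorted_prefix u x \<longleftrightarrow> x = p" for x
    using assms maximal_sorted_prefix_unique by blast
  moreover have "u \<noteq> []" "p \<in> {1..length u}"
    using assms by (auto simp: maximal_sorted_prefix_def)
  ultimately show ?thesis by (simp add: sum_wr_first_block)
qed

lemma sum_wr_maximal_sorted_suffix:
  assumes "maximal_sorted_suffix u q"
  shows "sum_wr w u = sum_wr w (take q u) * w (length u - q)"
proof -
  have "maximal_sorted_suffix u (length u - x) \<longleftrightarrow> x = length u - q" if "x \<le> length u" for x
  proof
    assume "maximal_sorted_suffix u (length u - x)"
    then have "length u - x = q" using assms by (rule maximal_sorted_suffix_unique)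
    then show "x = length u - q" using that by simp
  next
    assume "x = length u - q"
    then show "maximal_sorted_suffix u (length u - x)"
      using assms that by (simp add: maximal_sorted_suffix_def)
  qed
  moreover have "u \<noteq> []" "q < length u"
    using assms by (auto simp: maximal_sorted_suffix_def)
  ultimately have "sum_wr w u = (\<Sum>x=1..length u.
      if x = length u - q then sum_wr w (take (length u - x) u) * w x else 0)"
    by (auto simp: sum_wr_last_block intro!: sum.cong)
  with \<open>q < length u\<close> show ?thesis by simp
qed

definition weight_fps :: "(nat \<Rightarrow> 'a::field) \<Rightarrow> 'a fps" where
  "weight_fps w = Abs_fps (\<lambda>k. if k = 0 then 1 else w k)"

lemma sum_wr_drop_in_first_block:
  assumes "maximal_sorted_prefix u p" "k \<le> p"
  shows "sum_wr w (drop k u) = fps_nth (weight_fps w) (p - k) * sum_wr w (drop p u)"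
proof (cases "k = p")
  case False
  then have "maximal_sorted_prefix (drop k u) (p - k)"
    using assms by (intro maximal_sorted_prefix_drop) auto
  then show ?thesis
    using assms False by (simp add: sum_wr_maximal_sorted_prefix weight_fps_def)
qed (simp add: weight_fps_def)

lemma sum_wr_take_in_last_block:
  assumes "maximal_sorted_suffix u q" "q \<le> k" "k \<le> length u"
  shows "sum_wr w (take k u) = sum_wr w (take q u) * fps_nth (weight_fps w) (k - q)"
proof (cases "k = q")
  case False
  then have "maximal_sorted_suffix (take k u) q"
    using assms by (intro maximal_sorted_suffix_take) auto
  then show ?thesis
    using assms False by (simp add: sum_wr_maximal_sorted_suffix weight_fps_def min_def)
qed (simp add: weight_fps_def)

lemma a_coeff_convolution_weight:
  assumes "0 < p"
  shows "(\<Sum>k\<le>p. a_coeff w k * fps_nth (weight_fps w) (p - k)) = 0"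
proof -
  have "inverse (weight_fps w) * weight_fps w = 1"
    by (rule inverse_mult_eq_1) (simp add: weight_fps_def)
  then have "fps_nth (inverse (weight_fps w) * weight_fps w) p = 0" using assms by simp
  then show ?thesis by (simp add: fps_mult_nth a_coeff_def weight_fps_def atLeast0AtMost)
qed

lemma weight_convolution_a_coeff:
  assumes "0 < p"
  shows "(\<Sum>k\<le>p. fps_nth (weight_fps w) k * a_coeff w (p - k)) = 0"
proof -
  have "weight_fps w * inverse (weight_fps w) = 1"
    by (rule inverse_mult_eq_1') (simp add: weight_fps_def)
  then have "fps_nth (weight_fps w * inverse (weight_fps w)) p = 0" using assms by simp
  then show ?thesis by (simp add: fps_mult_nth a_coeff_def weight_fps_def atLeast0AtMost)
qed

lemma sum_ah_take:
  "k \<le> length u \<Longrightarrow> sum_ah w (take k u) = (if sorted (take k u) then a_coeff w k else 0)"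
  by (simp add: sum_ah_def h_series_def min_def)

lemma sum_ah_drop:
  "sum_ah w (drop k u) = (if sorted (drop k u) then a_coeff w (length u - k) else 0)"
  by (simp add: sum_ah_def h_series_def)

lemma nc_mult_Nil: "nc_mult f g [] = f [] * g []"
  by (simp add: nc_mult_def)

lemma sum_ah_Nil: "sum_ah w [] = 1"
  by (simp add: sum_ah_def h_series_def a_coeff_def)

lemma nc_mult_sum_ah_sum_wr: "nc_mult (sum_ah w) (sum_wr w) = nc_one"
proof
  fix u
  show "nc_mult (sum_ah w) (sum_wr w) u = nc_one u"
  proof (cases "u = []")
    case False
    then obtain p where p: "maximal_sorted_prefix u p"
      using maximal_sorted_prefix_exists by blast
    then have "0 < p" "p \<le> length u" by (auto simp: maximal_sorted_prefix_def)
    have "nc_mult (sum_ah w) (sum_wr w) u = (\<Sum>k\<le>length u.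
        if k \<le> p then a_coeff w k * fps_nth (weight_fps w) (p - k) * sum_wr w (drop p u) else 0)"
      unfolding nc_mult_def
    proof (intro sum.cong refl)
      fix k assume "k \<in> {..length u}"
      then show "sum_ah w (take k u) * sum_wr w (drop k u) =
          (if k \<le> p then a_coeff w k * fps_nth (weight_fps w) (p - k) * sum_wr w (drop p u)
           else 0)"
        using p sum_wr_drop_in_first_block[OF p, of k w]
        by (simp add: sum_ah_take maximal_sorted_prefix_sorted_take_iff)
    qed
    also have "\<dots> = (\<Sum>k\<in>{k\<in>{..length u}. k \<le> p}.
        a_coeff w k * fps_nth (weight_fps w) (p - k) * sum_wr w (drop p u))"
      by (rule sum.inter_filter[symmetric]) simp
    also have "{k\<in>{..length u}. k \<le> p} = {..p}"
      using \<open>p \<le> length u\<close> by auto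
    also have "(\<Sum>k\<le>p. a_coeff w k * fps_nth (weight_fps w) (p - k) * sum_wr w (drop p u)) =
        (\<Sum>k\<le>p. a_coeff w k * fps_nth (weight_fps w) (p - k)) * sum_wr w (drop p u)"
      by (simp add: sum_distrib_right)
    also have "\<dots> = 0" using \<open>0 < p\<close> by (simp add: a_coeff_convolution_weight)
    finally show ?thesis using False by (simp add: nc_one_def)
  qed (simp add: nc_mult_Nil sum_ah_Nil sum_wr_Nil nc_one_def)
qed

lemma nc_mult_sum_wr_sum_ah: "nc_mult (sum_wr w) (sum_ah w) = nc_one"
proof
  fix u
  show "nc_mult (sum_wr w) (sum_ah w) u = nc_one u"
  proof (cases "u = []")
    case False
    then obtain q where q: "maximal_sorted_suffix u q"
      using maximal_sorted_suffix_exists by blast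
    then have "q < length u" by (simp add: maximal_sorted_suffix_def)
    have "nc_mult (sum_wr w) (sum_ah w) u = (\<Sum>k\<le>length u.
        if q \<le> k then sum_wr w (take q u) * (fps_nth (weight_fps w) (k - q) * a_coeff w (length u - k))
        else 0)"
      unfolding nc_mult_def
    proof (intro sum.cong refl)
      fix k assume "k \<in> {..length u}"
      then show "sum_wr w (take k u) * sum_ah w (drop k u) = (if q \<le> k
          then sum_wr w (take q u) * (fps_nth (weight_fps w) (k - q) * a_coeff w (length u - k))
          else 0)"
        using q sum_wr_take_in_last_block[OF q, of k w]
        by (simp add: sum_ah_drop maximal_sorted_suffix_sorted_drop_iff)
    qed
    also have "\<dots> = (\<Sum>k\<in>{k\<in>{..length u}. q \<le> k}.
        sum_wr w (take q u) * (fps_nth (weight_fps w) (k - q) * a_coeff w (length u - k)))"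
      by (rule sum.inter_filter[symmetric]) simp
    also have "{k\<in>{..length u}. q \<le> k} = {q..length u}"
      by auto
    also have "(\<Sum>k\<in>{q..length u}.
        sum_wr w (take q u) * (fps_nth (weight_fps w) (k - q) * a_coeff w (length u - k))) =
        sum_wr w (take q u) *
        (\<Sum>k\<in>{q..length u}. fps_nth (weight_fps w) (k - q) * a_coeff w (length u - k))"
      by (simp add: sum_distrib_left)
    also have "(\<Sum>k\<in>{q..length u}. fps_nth (weight_fps w) (k - q) * a_coeff w (length u - k)) =
        (\<Sum>j\<le>length u - q. fps_nth (weight_fps w) j * a_coeff w (length u - q - j))"
      using \<open>q < length u\<close> by (simp add: sum.atLeastAtMost_shift_0 atLeast0AtMost)
    also have "\<dots> = 0"
      using \<open>q < length u\<close> weight_convolution_a_coeff[of "length u - q" w] by simp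
    finally show ?thesis using False by (simp add: nc_one_def)
  qed (simp add: nc_mult_Nil sum_ah_Nil sum_wr_Nil nc_one_def)
qed

theorem theorem11:
  fixes w :: "nat \<Rightarrow> 'a::field_char_0"
  shows "nc_mult (sum_wr w) (sum_ah w) = nc_one \<and> nc_mult (sum_ah w) (sum_wr w) = nc_one"
  using nc_mult_sum_wr_sum_ah nc_mult_sum_ah_sum_wr by blast

end
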